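(* Let $\beta=1$, $\gamma>2$ and $G\in\mathcal S_{Rob}(\mathbb R^* )$. Then $$\lim_{n\to\infty}\Big\{G_+'(0)\sum_{x=0}^{\infty}G(\tfrac xn)\sum_{r=x+1}^{\infty}r\,p(r)+G_-'(0)\sum_{x=-\infty}^{-1}G(\tfrac xn)\sum_{r=-\infty}^{x}r\,p(r)\Big\}=\frac{\kappa_\gamma}{\hat\alpha}[\nabla_{\beta,\gamma}G(0)]^2,$$ where $\nabla_{\beta,\gamma}G(0)=G_+'(0)$.
   Context: Fix $\gamma>2$ and $\alpha>0$. Let $p(0)=0$, $p(x)=c_\gamma|x|^{-\gamma-1}$ ($x\ne0$), with $c_\gamma$ the constant making $\sum_xp(x)=1$. Let $m=\sum_{x\ge1}xp(x)$, $\sigma^2=\sum_xx^2p(x)$, $\kappa_\gamma=\sigma^2/2$, $\hat\alpha=\alpha m/\kappa_\gamma=2\alpha m/\sigma^2$. $\mathcal S_{Rob}(\mathbb R^* )$ is the space of functions $G=\mathbb 1_{\{u<0\}}G_-+\mathbb 1_{\{u\ge0\}}G_+$ with $G_\pm$ Schwartz functions satisfying $G_-^{(2k+1)}(0)=G_+^{(2k+1)}(0)=\hat\alpha[G_+^{(2k)}(0)-G_-^{(2k)}(0)]$ for all $k\ge0$; $\nabla_{\beta,\gamma}G$ is the piecewise first derivative ($G_-'$ on $(-\infty,0)$, $G_+'$ on $[0,\infty)$). *)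

theory Defs
  imports "HOL-Analysis.Analysis"
begin

definition w_gamma :: "real \<Rightarrow> int \<Rightarrow> real" where
  "w_gamma \<gamma> x = (if x = 0 then 0 else \<bar>real_of_int x\<bar> powr (-\<gamma> - 1))"

definition c_gamma :: "real \<Rightarrow> real" where
  "c_gamma \<gamma> = 1 / (\<Sum>\<^sub>\<infinity>x\<in>(UNIV::int set). w_gamma \<gamma> x)"

definition p_gamma :: "real \<Rightarrow> int \<Rightarrow> real" where
  "p_gamma \<gamma> x = c_gamma \<gamma> * w_gamma \<gamma> x"

definition m_gamma :: "real \<Rightarrow> real" where
  "m_gamma \<gamma> = (\<Sum>\<^sub>\<infinity>x\<in>{1::int..}. real_of_int x * p_gamma \<gamma> x)"

definition sigma2_gamma :: "real \<Rightarrow> real" where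
  "sigma2_gamma \<gamma> = (\<Sum>\<^sub>\<infinity>x\<in>(UNIV::int set). (real_of_int x)^2 * p_gamma \<gamma> x)"

definition kappa_gamma :: "real \<Rightarrow> real" where
  "kappa_gamma \<gamma> = sigma2_gamma \<gamma> / 2"

definition alpha_hat :: "real \<Rightarrow> real \<Rightarrow> real" where
  "alpha_hat \<alpha> \<gamma> = \<alpha> * m_gamma \<gamma> / kappa_gamma \<gamma>"

definition schwartz :: "(real \<Rightarrow> real) \<Rightarrow> bool" where
  "schwartz f \<longleftrightarrow>
     (\<forall>k x. ((deriv ^^ k) f has_real_derivative (deriv ^^ Suc k) f x) (at x)) \<and>
     (\<forall>j k. \<exists>C. \<forall>x. \<bar>x\<bar> ^ j * \<bar>(deriv ^^ k) f x\<bar> \<le> C)"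

text \<open>S_Rob(R^*): pairs (G_-, G_+) of Schwartz functions with the Robin conditions.\<close>
definition S_Rob :: "real \<Rightarrow> (real \<Rightarrow> real) \<Rightarrow> (real \<Rightarrow> real) \<Rightarrow> bool" where
  "S_Rob ah Gm Gp \<longleftrightarrow> schwartz Gm \<and> schwartz Gp \<and>
     (\<forall>k. (deriv ^^ (2*k+1)) Gm 0 = ah * ((deriv ^^ (2*k)) Gp 0 - (deriv ^^ (2*k)) Gm 0) \<and>
          (deriv ^^ (2*k+1)) Gp 0 = ah * ((deriv ^^ (2*k)) Gp 0 - (deriv ^^ (2*k)) Gm 0))"

definition glue :: "(real \<Rightarrow> real) \<Rightarrow> (real \<Rightarrow> real) \<Rightarrow> real \<Rightarrow> real" where
  "glue Gm Gp u = (if u < 0 then Gm u else Gp u)"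

end

theory Submission
  imports Defs
begin

(* With T(y) = sum_{r>y} r p(r) the first-moment tails of p, exchanging the order of summation
   gives sum_{y>=0} T(y) = sum_{r>=1} r^2 p(r) = kappa, finite because gamma > 2.  As p is even,
   the negative half of the sum is minus the reflected positive half, so both halves are
   T-weighted averages of G_+(y/n) and G_-(-(y+1)/n), and dominated convergence (G_+- bounded and
   continuous) gives the limit kappa (G_+'(0) G_+(0) - G_-'(0) G_-(0)).  The Robin condition
   G_+'(0) = G_-'(0) = alpha_hat (G_+(0) - G_-(0)) turns this into kappa / alpha_hat G_+'(0)^2. *)

lemma tendsto_infsum_dominated:
  fixes T :: "'a \<Rightarrow> real" and H :: "real \<Rightarrow> real" and a :: "nat \<Rightarrow> 'a \<Rightarrow> real"
  assumes T: "(T has_sum S) A" and T_nonneg: "\<And>y. y \<in> A \<Longrightarrow> T y \<ge> 0"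
    and H_bounded: "\<And>u. \<bar>H u\<bar> \<le> B" and H_cont: "isCont H c"
    and a: "\<And>y. (\<lambda>n. a n y) \<longlonglongrightarrow> c"
  shows "(\<lambda>n. \<Sum>\<^sub>\<infinity>y\<in>A. H (a n y) * T y) \<longlonglongrightarrow> H c * S"
proof -
  have "(\<lambda>y. norm (T y)) summable_on A"
    using has_sum_imp_summable[OF T] by (rule summable_on_cong[THEN iffD1, rotated]) (simp add: T_nonneg)
  hence "Infinite_Set_Sum.abs_summable_on T A"
    using abs_summable_equivalent by blast
  hence int_T: "integrable (count_space A) T"
    by (simp add: Infinite_Set_Sum.abs_summable_on_def)
  have int_infsum: "integral\<^sup>L (count_space A) g = infsum g A"
    if "integrable (count_space A) g" for g :: "'a \<Rightarrow> real"
    using that infsetsum_infsum[of g A] by (simp add: infsetsum_def Infinite_Set_Sum.abs_summable_on_def)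
  have dominating: "integrable (count_space A) (\<lambda>y. B * T y)"
    using int_T by simp
  have pointwise: "AE y in count_space A. (\<lambda>n. H (a n y) * T y) \<longlonglongrightarrow> H c * T y"
    using isCont_tendsto_compose[OF H_cont a] by (intro AE_I2 tendsto_intros)
  have bound: "AE y in count_space A. norm (H (a n y) * T y) \<le> B * T y" for n
    using H_bounded T_nonneg by (auto simp: AE_count_space abs_mult mult_right_mono)
  have "integrable (count_space A) (\<lambda>y. H (a n y) * T y)" for n
    by (rule integrable_dominated_convergence2[OF _ _ dominating pointwise bound]) auto
  moreover have "(\<lambda>n. integral\<^sup>L (count_space A) (\<lambda>y. H (a n y) * T y))
      \<longlonglongrightarrow> integral\<^sup>L (count_space A) (\<lambda>y. H c * T y)"
    by (rule integral_dominated_convergence[OF _ _ dominating pointwise bound]) auto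
  ultimately show ?thesis
    using int_T by (simp add: int_infsum infsum_cmult_right' infsumI[OF T])
qed

lemma has_sum_tails_int:
  fixes q :: "int \<Rightarrow> real"
  assumes nonneg: "\<And>r. r \<ge> 1 \<Longrightarrow> q r \<ge> 0"
    and moment: "((\<lambda>r. of_int r * q r) has_sum M) {1..}"
  shows "((\<lambda>y. \<Sum>\<^sub>\<infinity>r\<in>{y+1..}. q r) has_sum M) {0..}"
proof -
  define f where "f = (\<lambda>(r::int, y::int). q r)"
  have slice: "((\<lambda>y. f (r, y)) has_sum of_int r * q r) {0..r-1}" if "r \<ge> 1" for r
    using that unfolding f_def by (intro has_sum_finiteI) auto
  have "f summable_on Sigma {1..} (\<lambda>r. {0..r-1})"
    using slice moment nonneg
    by (intro summable_on_SigmaI) (auto simp: f_def dest: has_sum_imp_summable)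
  hence "(f has_sum M) (Sigma {1..} (\<lambda>r. {0..r-1}))"
    using slice moment by (intro has_sum_SigmaI) auto
  also have "Sigma {1..} (\<lambda>r. {0..r-1}) = prod.swap ` Sigma {0::int..} (\<lambda>y. {y+1..})"
    by (rule set_eqI) (force simp: image_iff)
  also have "(f has_sum M) \<dots> \<longleftrightarrow> ((f \<circ> prod.swap) has_sum M) (Sigma {0..} (\<lambda>y. {y+1..}))"
    by (rule has_sum_reindex) simp
  finally have swapped: "((\<lambda>(y, r). q r) has_sum M) (Sigma {0..} (\<lambda>y. {y+1..}))"
    by (simp add: f_def o_def case_prod_unfold)
  show ?thesis
  proof (rule has_sum_SigmaD[OF swapped])
    fix y :: int assume "y \<in> {0..}"
    with has_sum_imp_summable[OF swapped] have "q summable_on {y+1..}"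
      by (rule summable_on_SigmaD1[of "\<lambda>y r. q r"])
    thus "((\<lambda>r. (\<lambda>(y, r). q r) (y, r)) has_sum (\<Sum>\<^sub>\<infinity>r\<in>{y+1..}. q r)) {y+1..}"
      by (simp add: has_sum_infsum)
  qed
qed

lemma has_sum_even_int:
  fixes h :: "int \<Rightarrow> 'a::topological_comm_monoid_add"
  assumes even: "\<And>r. h (-r) = h r" and "h 0 = 0" and pos: "(h has_sum S) {1..}"
  shows "(h has_sum (S + S)) UNIV"
proof -
  have "h \<circ> uminus = h"
    using even by auto
  hence "(h has_sum S) (uminus ` {1..})"
    using pos by (subst has_sum_reindex) auto
  with pos have "(h has_sum (S + S)) ({1..} \<union> uminus ` {1..})"
    by (intro has_sum_Un_disjoint) auto
  also have "{1..} \<union> uminus ` {1..} = - {0::int}"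
    by (auto simp: image_iff intro!: exI[of _ "- _"])
  finally show ?thesis
    by (rule has_sum_cong_neutral[THEN iffD1, rotated -1]) (auto simp: \<open>h 0 = 0\<close>)
qed

lemma summable_on_int_powr:
  fixes s :: real
  assumes "s < -1"
  shows "(\<lambda>r::int. of_int r powr s) summable_on {0..}"
proof -
  have "summable (\<lambda>n. real n powr s)"
    using assms by (simp add: summable_real_powr_iff)
  hence "((\<lambda>r::int. of_int r powr s) \<circ> int) summable_on UNIV"
    by (subst summable_on_UNIV_nonneg_real_iff) (auto simp: o_def)
  moreover have "int ` UNIV = {0..}"
    by (auto simp: image_iff intro!: exI[of _ "nat _"])
  ultimately show ?thesis
    by (subst (asm) summable_on_reindex[symmetric]) auto
qed

lemma p_gamma_0 [simp]: "p_gamma \<gamma> 0 = 0"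
  by (simp add: p_gamma_def w_gamma_def)

lemma p_gamma_uminus [simp]: "p_gamma \<gamma> (-r) = p_gamma \<gamma> r"
  by (simp add: p_gamma_def w_gamma_def)

lemma p_gamma_nonneg: "p_gamma \<gamma> r \<ge> 0"
proof -
  have "c_gamma \<gamma> \<ge> 0"
    unfolding c_gamma_def by (simp add: infsum_nonneg w_gamma_def)
  thus ?thesis
    by (simp add: p_gamma_def w_gamma_def)
qed

lemma second_moment_p_gamma:
  assumes "r \<ge> 1"
  shows "of_int r * (of_int r * p_gamma \<gamma> r) = c_gamma \<gamma> * of_int r powr (1 - \<gamma>)"
proof -
  have r_pos: "of_int r > (0::real)"
    using assms by simp
  have "of_int r powr (1 - \<gamma>) = of_int r powr 1 * (of_int r powr 1 * of_int r powr (-\<gamma> - 1))"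
    unfolding powr_add[symmetric] by simp
  also have "\<dots> = of_int r * (of_int r * of_int r powr (-\<gamma> - 1))"
    using r_pos by simp
  finally have "of_int r * (of_int r * of_int r powr (-\<gamma> - 1)) = (of_int r powr (1 - \<gamma>) :: real)"
    by simp
  thus ?thesis
    using assms by (simp add: p_gamma_def w_gamma_def)
qed

lemma summable_on_second_moment_p_gamma:
  assumes "\<gamma> > 2"
  shows "(\<lambda>r. of_int r * (of_int r * p_gamma \<gamma> r)) summable_on {1..}"
proof -
  have "(\<lambda>r::int. c_gamma \<gamma> * of_int r powr (1 - \<gamma>)) summable_on {0..}"
    using assms by (intro summable_on_cmult_right summable_on_int_powr) auto
  hence "(\<lambda>r::int. c_gamma \<gamma> * of_int r powr (1 - \<gamma>)) summable_on {1..}"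
    by (rule summable_on_subset_banach) auto
  thus ?thesis
    by (rule summable_on_cong[THEN iffD1, rotated]) (simp add: second_moment_p_gamma)
qed

lemma has_sum_second_moment_p_gamma:
  assumes "\<gamma> > 2"
  shows "((\<lambda>r. of_int r * (of_int r * p_gamma \<gamma> r)) has_sum kappa_gamma \<gamma>) {1..}"
proof -
  define M where "M = (\<Sum>\<^sub>\<infinity>r\<in>{1..}. of_int r * (of_int r * p_gamma \<gamma> r) :: real)"
  have "((\<lambda>r. (of_int r)\<^sup>2 * p_gamma \<gamma> r) has_sum M) {1..}"
    using has_sum_infsum[OF summable_on_second_moment_p_gamma[OF assms]]
    by (simp add: M_def power2_eq_square mult.assoc)
  hence "((\<lambda>r. (of_int r)\<^sup>2 * p_gamma \<gamma> r) has_sum (M + M)) UNIV"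
    by (intro has_sum_even_int) auto
  hence "kappa_gamma \<gamma> = M"
    unfolding kappa_gamma_def sigma2_gamma_def by (simp add: infsumI)
  thus ?thesis
    using has_sum_infsum[OF summable_on_second_moment_p_gamma[OF assms]] by (simp add: M_def)
qed

definition tail_moment :: "real \<Rightarrow> int \<Rightarrow> real" where
  "tail_moment \<gamma> x = (\<Sum>\<^sub>\<infinity>r\<in>{x+1..}. of_int r * p_gamma \<gamma> r)"

lemma tail_moment_nonneg: "x \<ge> 0 \<Longrightarrow> tail_moment \<gamma> x \<ge> 0"
  unfolding tail_moment_def by (intro infsum_nonneg mult_nonneg_nonneg p_gamma_nonneg) auto

lemma has_sum_tail_moment:
  assumes "\<gamma> > 2"
  shows "(tail_moment \<gamma> has_sum kappa_gamma \<gamma>) {0..}"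
  unfolding tail_moment_def
  by (rule has_sum_tails_int[OF _ has_sum_second_moment_p_gamma[OF assms]])
     (simp add: p_gamma_nonneg)

lemma infsum_lower_tail_moment:
  "(\<Sum>\<^sub>\<infinity>r\<in>{..x}. of_int r * p_gamma \<gamma> r) = - tail_moment \<gamma> (-x-1)"
proof -
  have reflect: "{..x} = uminus ` {-x..}"
    by (auto simp: image_iff intro!: exI[of _ "- _"])
  have "(\<Sum>\<^sub>\<infinity>r\<in>{..x}. of_int r * p_gamma \<gamma> r) = (\<Sum>\<^sub>\<infinity>r\<in>{-x..}. - (of_int r * p_gamma \<gamma> r))"
    unfolding reflect by (subst infsum_reindex) (auto simp: o_def)
  thus ?thesis
    by (simp add: infsum_uminus tail_moment_def)
qed

lemma infsum_negative_half_reflect: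
  "(\<Sum>\<^sub>\<infinity>x\<in>{..(-1::int)}. f x * (\<Sum>\<^sub>\<infinity>r\<in>{..x}. of_int r * p_gamma \<gamma> r))
     = - (\<Sum>\<^sub>\<infinity>y\<in>{0..}. f (-y-1) * tail_moment \<gamma> y)"
proof -
  have "{..(-1::int)} = (\<lambda>y. -y-1) ` {0..}"
    by (auto simp: image_iff intro!: bexI[of _ "- _ - 1"])
  moreover have "inj_on (\<lambda>y::int. -y-1) {0..}"
    by (auto simp: inj_on_def)
  ultimately show ?thesis
    by (simp add: infsum_reindex o_def infsum_lower_tail_moment infsum_uminus)
qed

lemma schwartz_isCont: "schwartz f \<Longrightarrow> isCont f x"
  unfolding schwartz_def by (metis DERIV_isCont funpow_0)

lemma schwartz_bounded: "schwartz f \<Longrightarrow> \<exists>C. \<forall>x. \<bar>f x\<bar> \<le> C"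
  unfolding schwartz_def by (metis funpow_0 mult_1 power_0)

lemma tendsto_tail_moment_weighted_sum:
  assumes "\<gamma> > 2" and "schwartz G" and "\<And>y. (\<lambda>n. a n y) \<longlonglongrightarrow> 0"
  shows "(\<lambda>n. \<Sum>\<^sub>\<infinity>y\<in>{0..}. G (a n y) * tail_moment \<gamma> y) \<longlonglongrightarrow> G 0 * kappa_gamma \<gamma>"
proof -
  obtain B where "\<And>u. \<bar>G u\<bar> \<le> B"
    using schwartz_bounded[OF assms(2)] by blast
  from has_sum_tail_moment[OF assms(1)] _ this schwartz_isCont[OF assms(2)] assms(3)
  show ?thesis
    by (rule tendsto_infsum_dominated) (simp add: tail_moment_nonneg)
qed

lemma infsum_glue_nonneg_half:
  "(\<Sum>\<^sub>\<infinity>x\<in>{0::int..}. glue Gm Gp (of_int x / real n) * f x)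
     = (\<Sum>\<^sub>\<infinity>x\<in>{0..}. Gp (of_int x / real n) * f x)"
  by (rule infsum_cong) (simp add: glue_def divide_less_0_iff)

(* For n = 0 every point is sent to 0, where glue takes the value of Gp. *)
lemma infsum_glue_negative_half:
  assumes "n \<ge> 1"
  shows "(\<Sum>\<^sub>\<infinity>x\<in>{..(-1::int)}. glue Gm Gp (of_int x / real n) *
           (\<Sum>\<^sub>\<infinity>r\<in>{..x}. of_int r * p_gamma \<gamma> r))
     = - (\<Sum>\<^sub>\<infinity>y\<in>{0..}. Gm ((- of_int y - 1) / real n) * tail_moment \<gamma> y)"
  unfolding infsum_negative_half_reflect using assms
  by (intro arg_cong[of _ _ uminus] infsum_cong) (simp add: glue_def divide_neg_pos)

theorem lemmaA4:
  fixes \<alpha> \<gamma> :: real and Gm Gp :: "real \<Rightarrow> real"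
  assumes "\<gamma> > 2" and "\<alpha> > 0"
    and "S_Rob (alpha_hat \<alpha> \<gamma>) Gm Gp"
  shows "(\<lambda>n::nat.
      deriv Gp 0 * (\<Sum>\<^sub>\<infinity>x\<in>{0::int..}. glue Gm Gp (real_of_int x / real n) *
          (\<Sum>\<^sub>\<infinity>r\<in>{x+1..}. real_of_int r * p_gamma \<gamma> r))
    + deriv Gm 0 * (\<Sum>\<^sub>\<infinity>x\<in>{..(-1::int)}. glue Gm Gp (real_of_int x / real n) *
          (\<Sum>\<^sub>\<infinity>r\<in>{..x}. real_of_int r * p_gamma \<gamma> r)))
    \<longlonglongrightarrow> kappa_gamma \<gamma> / alpha_hat \<alpha> \<gamma> * (deriv Gp 0)^2"
proof -
  define ah where "ah = alpha_hat \<alpha> \<gamma>"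
  have Gm: "schwartz Gm" and Gp: "schwartz Gp"
    and robin: "deriv Gm 0 = ah * (Gp 0 - Gm 0)" "deriv Gp 0 = ah * (Gp 0 - Gm 0)"
    using assms(3) unfolding S_Rob_def ah_def by (auto dest: spec[of _ 0])
  have "(\<lambda>n. deriv Gp 0 * (\<Sum>\<^sub>\<infinity>x\<in>{0..}. Gp (of_int x / real n) * tail_moment \<gamma> x)
      + deriv Gm 0 * - (\<Sum>\<^sub>\<infinity>y\<in>{0..}. Gm ((- of_int y - 1) / real n) * tail_moment \<gamma> y))
      \<longlonglongrightarrow> deriv Gp 0 * (Gp 0 * kappa_gamma \<gamma>) + deriv Gm 0 * - (Gm 0 * kappa_gamma \<gamma>)"
    using assms(1) Gm Gp by (intro tendsto_intros tendsto_tail_moment_weighted_sum)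
  also have "deriv Gp 0 * (Gp 0 * kappa_gamma \<gamma>) + deriv Gm 0 * - (Gm 0 * kappa_gamma \<gamma>)
      = kappa_gamma \<gamma> / ah * (deriv Gp 0)^2"
    unfolding robin by (cases "ah = 0") (simp_all add: field_simps power2_eq_square)
  finally show ?thesis
    unfolding ah_def tail_moment_def[symmetric] infsum_glue_nonneg_half
    by (rule Lim_transform_eventually)
       (auto simp: eventually_sequentially infsum_glue_negative_half intro!: exI[of _ 1])
qed

end
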